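(* Let $M>0$ and $0\le a<M$, and set $r_+=M+\sqrt{M^2-a^2}$, $\Delta(r)=r^2-2Mr+a^2$. Let $E,L_z,Q\in\mathbb{R}$ with $Q<0$ be such that there exists $\theta\in(0,\pi)$ with $\Theta(\theta,E,L_z,Q)\ge 0$, where $$\Theta(\theta,E,L_z,Q)=Q-\Big(\frac{L_z^2}{\sin^2\theta}-E^2a^2\Big)\cos^2\theta .$$ Let $K=Q+(aE-L_z)^2$ and $$R(r)=\big((r^2+a^2)E-aL_z\big)^2-\Delta(r)K = E^2r^4+(a^2E^2-Q-L_z^2)r^2+2MKr-a^2Q.$$ Then $R(r)>0$ for all $r\in(r_+,\infty)$.
   Context: This concerns null geodesics in the exterior region $r>r_+$ of a sub-extremal Kerr spacetime of mass $M$ and rotation parameter $a$, written in Boyer–Lindquist coordinates $(t,r,\theta,\phi)$. For a null geodesic with affine parameter, $E=-g(\partial_t,\dot\gamma)$ is the energy, $L_z=g(\partial_\phi,\dot\gamma)$ the axial angular momentum, $K$ Carter's constant and $Q=K-(aE-L_z)^2$; with $\Sigma=r^2+a^2\cos^2\theta$ these satisfy $\Sigma^2\dot r^2=R(r)$ and $\Sigma^2\dot\theta^2=\Theta(\theta,E,L_z,Q)$, so a null geodesic with these constants can only pass through points where $\Theta\ge 0$. *)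

theory Defs
  imports Complex_Main
begin

definition r_plus :: "real \<Rightarrow> real \<Rightarrow> real" where
  "r_plus M a = M + sqrt (M\<^sup>2 - a\<^sup>2)"

definition Delta :: "real \<Rightarrow> real \<Rightarrow> real \<Rightarrow> real" where
  "Delta M a r = r\<^sup>2 - 2 * M * r + a\<^sup>2"

definition Theta :: "real \<Rightarrow> real \<Rightarrow> real \<Rightarrow> real \<Rightarrow> real \<Rightarrow> real" where
  "Theta a \<theta> E Lz Q = Q - (Lz\<^sup>2 / (sin \<theta>)\<^sup>2 - E\<^sup>2 * a\<^sup>2) * (cos \<theta>)\<^sup>2"

definition Carter_K :: "real \<Rightarrow> real \<Rightarrow> real \<Rightarrow> real \<Rightarrow> real" where
  "Carter_K a E Lz Q = Q + (a * E - Lz)\<^sup>2"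

definition Rpot :: "real \<Rightarrow> real \<Rightarrow> real \<Rightarrow> real \<Rightarrow> real \<Rightarrow> real \<Rightarrow> real" where
  "Rpot M a E Lz Q r = ((r\<^sup>2 + a\<^sup>2) * E - a * Lz)\<^sup>2 - Delta M a r * Carter_K a E Lz Q"

end

theory Submission
  imports Defs
begin

text \<open>Since \<open>Q < 0\<close>, the condition \<open>\<Theta> \<ge> 0\<close> forces the coefficient of \<open>cos\<^sup>2 \<theta>\<close> to be
  negative, i.e. \<open>L\<^sub>z\<^sup>2 < E\<^sup>2 a\<^sup>2 sin\<^sup>2 \<theta> \<le> E\<^sup>2 a\<^sup>2\<close>. Writing
  \<open>R(r) = E\<^sup>2 r\<^sup>4 + (a\<^sup>2 E\<^sup>2 - L\<^sub>z\<^sup>2) r\<^sup>2 - Q \<Delta>(r) + 2 M r (a E - L\<^sub>z)\<^sup>2\<close>, every term is then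
  nonnegative for \<open>r > r\<^sub>+\<close>, and \<open>-Q \<Delta>(r)\<close> is strictly positive because \<open>\<Delta> > 0\<close> outside
  the horizon.\<close>

lemma Delta_pos_beyond_r_plus:
  assumes "\<bar>a\<bar> \<le> M" and "r > r_plus M a"
  shows "Delta M a r > 0"
proof -
  have "M\<^sup>2 - a\<^sup>2 \<ge> 0"
    using assms(1) abs_le_square_iff[of a M] by simp
  then have root: "sqrt (M\<^sup>2 - a\<^sup>2) \<ge> 0" "(sqrt (M\<^sup>2 - a\<^sup>2))\<^sup>2 = M\<^sup>2 - a\<^sup>2"
    by auto
  have "r - M > sqrt (M\<^sup>2 - a\<^sup>2)"
    using assms(2) unfolding r_plus_def by simp
  then have "(r - M)\<^sup>2 > M\<^sup>2 - a\<^sup>2"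
    using root by (metis power_strict_mono zero_less_numeral)
  then show ?thesis
    unfolding Delta_def by (simp add: power2_eq_square algebra_simps)
qed

lemma r_plus_ge:
  assumes "\<bar>a\<bar> \<le> M"
  shows "M \<le> r_plus M a"
  using assms abs_le_square_iff[of a M] unfolding r_plus_def by simp

lemma Theta_nonneg_imp_Lz_sq_less:
  assumes "Q < 0" and "0 < \<theta>" and "\<theta> < pi" and "Theta a \<theta> E Lz Q \<ge> 0"
  shows "Lz\<^sup>2 < (a * E)\<^sup>2"
proof -
  define s where "s = (sin \<theta>)\<^sup>2"
  have s_pos: "s > 0"
    using sin_gt_zero[OF assms(2,3)] unfolding s_def by simp
  have s_le_1: "s \<le> 1"
    unfolding s_def by (simp add: abs_square_le_1)
  have "(Lz\<^sup>2 / s - E\<^sup>2 * a\<^sup>2) * (cos \<theta>)\<^sup>2 < 0"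
    using assms(1,4) unfolding Theta_def s_def by simp
  then have "Lz\<^sup>2 / s < E\<^sup>2 * a\<^sup>2"
    by (simp add: mult_less_0_iff)
  then have "Lz\<^sup>2 < E\<^sup>2 * a\<^sup>2 * s"
    using s_pos by (simp add: divide_less_eq)
  also have "\<dots> \<le> E\<^sup>2 * a\<^sup>2"
    using s_le_1 by (simp add: mult_left_le)
  finally show ?thesis
    by (simp add: power_mult_distrib mult.commute)
qed

lemma Rpot_eq_sum_of_terms:
  "Rpot M a E Lz Q r =
     E\<^sup>2 * r ^ 4 + ((a * E)\<^sup>2 - Lz\<^sup>2) * r\<^sup>2 - Q * Delta M a r + 2 * M * r * (a * E - Lz)\<^sup>2"
  unfolding Rpot_def Delta_def Carter_K_def
  by (simp add: power2_eq_square power4_eq_xxxx algebra_simps)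

theorem lemma1:
  fixes M a E Lz Q :: real
  assumes "M > 0" and "0 \<le> a" and "a < M"
    and "Q < 0"
    and "\<exists>\<theta>. 0 < \<theta> \<and> \<theta> < pi \<and> Theta a \<theta> E Lz Q \<ge> 0"
  shows "\<forall>r. r > r_plus M a \<longrightarrow> Rpot M a E Lz Q r > 0"
proof (intro allI impI)
  fix r assume r: "r > r_plus M a"
  obtain \<theta> where "0 < \<theta>" "\<theta> < pi" "Theta a \<theta> E Lz Q \<ge> 0"
    using assms(5) by blast
  then have "((a * E)\<^sup>2 - Lz\<^sup>2) * r\<^sup>2 \<ge> 0"
    using Theta_nonneg_imp_Lz_sq_less[OF assms(4)] by (simp add: less_imp_le)
  moreover have "- Q * Delta M a r > 0"
    using Delta_pos_beyond_r_plus[OF _ r] assms(2-4) by (simp add: mult_neg_pos)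
  moreover have "2 * M * r * (a * E - Lz)\<^sup>2 \<ge> 0"
    using r r_plus_ge[of a M] assms(1-3) by simp
  moreover have "E\<^sup>2 * r ^ 4 \<ge> 0"
    by simp
  ultimately show "Rpot M a E Lz Q r > 0"
    unfolding Rpot_eq_sum_of_terms by linarith
qed

end
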